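(* For any integers $n\ge k\ge1$, $$w(n,k)=\sum_{j=1}^k\binom{n-j}{k-j}N(n,j)\quad\text{and}\quad N(n,k)=\sum_{j=1}^k\binom{n-j}{k-j}(-1)^{k-j}w(n,j).$$
   Context: For $n\ge k\ge1$, $N(n,k)=\frac1n\binom{n}{k}\binom{n}{k-1}$ (Narayana number) and $w(n,k)=\frac1k\binom{n-1}{k-1}\binom{n+k}{k-1}$. *)

theory Defs
  imports Main "HOL.Rat"
begin

definition narayana :: "nat \<Rightarrow> nat \<Rightarrow> rat" where
  "narayana n k = (1 / of_nat n) * of_nat (n choose k) * of_nat (n choose (k - 1))"

definition wnum :: "nat \<Rightarrow> nat \<Rightarrow> rat" where
  "wnum n k = (1 / of_nat k) * of_nat ((n - 1) choose (k - 1)) * of_nat ((n + k) choose (k - 1))"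

end

theory Submission
  imports Defs
begin

text \<open>Both identities are triangular systems with the matrix \<open>C(n - j, k - j)\<close>, and the
  inverse of that matrix is obtained by inserting signs \<open>(-1)^(k - j)\<close>, because
  \<open>C(n - i, k - i) C(k - i, j - i) = C(n - i, j - i) C(n - j, k - j)\<close> turns the composite
  into an alternating binomial sum. So the second identity follows from the first. For the
  first, \<open>C(n - j, k - j) N(n, j) = C(n - 1, k - 1) C(k, j) C(n, j - 1) / k\<close>, and Vandermonde's
  convolution sums \<open>C(k, j) C(n, j - 1)\<close> over \<open>j\<close> to \<open>C(n + k, k - 1)\<close>.\<close>

lemma choose_mult_shift:
  assumes "i \<le> j" "j \<le> k" "k \<le> n"
  shows "((n - i) choose (k - i)) * ((k - i) choose (j - i))
       = ((n - i) choose (j - i)) * ((n - j) choose (k - j))"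
proof -
  have "n - i - (j - i) = n - j" "k - i - (j - i) = k - j"
    using assms by auto
  then show ?thesis
    using choose_mult[of "j - i" "k - i" "n - i"] assms by simp
qed

lemma of_nat_choose_div_self:
  assumes "0 < k" "0 < n"
  shows "of_nat (n choose k) / of_nat n
       = (of_nat ((n - 1) choose (k - 1)) / of_nat k :: 'a::field_char_0)"
proof -
  have "of_nat k * of_nat (n choose k) = (of_nat n * of_nat ((n - 1) choose (k - 1)) :: 'a)"
    using times_binomial_minus1_eq[OF assms(1), of n] by (metis of_nat_mult)
  then show ?thesis
    using assms by (simp add: field_simps)
qed

lemma sum_alternating_choose_shift:
  assumes "i \<le> k"
  shows "(\<Sum>j=i..k. (-1) ^ (k - j) * of_nat ((k - i) choose (j - i)))
       = (if i = k then 1 else (0 :: 'a::comm_ring_1))"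
proof -
  have "(\<Sum>j=i..k. (-1) ^ (k - j) * of_nat ((k - i) choose (j - i)))
      = (\<Sum>t\<le>k - i. of_nat ((k - i) choose t) * 1 ^ t * (-1 :: 'a) ^ (k - i - t))"
    using assms sum.shift_bounds_cl_nat_ivl[of
        "\<lambda>j. (-1 :: 'a) ^ (k - j) * of_nat ((k - i) choose (j - i))" 0 i "k - i"]
    by (simp add: atLeast0AtMost mult.commute add.commute)
  also have "\<dots> = (1 + -1) ^ (k - i)"
    by (rule binomial_ring[symmetric])
  finally show ?thesis
    using assms by (simp add: power_0_left)
qed

lemma binomial_inversion_shifted:
  fixes a b :: "nat \<Rightarrow> 'a::comm_ring_1"
  assumes b: "\<And>k. m \<le> k \<Longrightarrow> k \<le> n \<Longrightarrow> b k = (\<Sum>j=m..k. of_nat ((n - j) choose (k - j)) * a j)"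
    and "m \<le> k" "k \<le> n"
  shows "a k = (\<Sum>j=m..k. of_nat ((n - j) choose (k - j)) * (-1) ^ (k - j) * b j)"
proof -
  define c where "c i j = (if i \<le> j then
      of_nat ((n - j) choose (k - j)) * (-1) ^ (k - j) * of_nat ((n - i) choose (j - i)) * a i
      else (0 :: 'a))" for i j
  have row: "of_nat ((n - j) choose (k - j)) * (-1) ^ (k - j) * b j = (\<Sum>i=m..k. c i j)"
    if j: "j \<in> {m..k}" for j
  proof -
    have "b j = (\<Sum>i=m..k. if i \<le> j then of_nat ((n - i) choose (j - i)) * a i else 0)"
      using j assms b[of j] by (auto intro: sum.mono_neutral_cong_left)
    then show ?thesis
      by (simp add: sum_distrib_left c_def if_distrib mult.assoc cong: if_cong)
  qed
  have column: "(\<Sum>j=m..k. c i j) = (if i = k then a i else 0)" if i: "i \<in> {m..k}" for i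
  proof -
    have "(\<Sum>j=m..k. c i j) = (\<Sum>j=i..k. c i j)"
      using i by (intro sum.mono_neutral_right) (auto simp: c_def)
    also have "\<dots> = (\<Sum>j=i..k. a i * of_nat ((n - i) choose (k - i))
        * ((-1) ^ (k - j) * of_nat ((k - i) choose (j - i))))"
    proof (rule sum.cong)
      fix j assume "j \<in> {i..k}"
      then have "of_nat ((n - i) choose (k - i)) * of_nat ((k - i) choose (j - i))
          = (of_nat ((n - i) choose (j - i)) * of_nat ((n - j) choose (k - j)) :: 'a)"
        using choose_mult_shift[of i j k n] assms by (metis atLeastAtMost_iff of_nat_mult)
      with \<open>j \<in> {i..k}\<close> show "c i j = a i * of_nat ((n - i) choose (k - i))
          * ((-1) ^ (k - j) * of_nat ((k - i) choose (j - i)))"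
        by (simp add: c_def algebra_simps)
    qed simp
    also have "\<dots> = a i * of_nat ((n - i) choose (k - i))
        * (\<Sum>j=i..k. (-1) ^ (k - j) * of_nat ((k - i) choose (j - i)))"
      by (simp only: sum_distrib_left)
    also have "\<dots> = (if i = k then a i else 0)"
      using i sum_alternating_choose_shift[of i k, where 'a='a] by simp
    finally show ?thesis .
  qed
  have "(\<Sum>j=m..k. of_nat ((n - j) choose (k - j)) * (-1) ^ (k - j) * b j)
      = (\<Sum>j=m..k. \<Sum>i=m..k. c i j)"
    using row by simp
  also have "\<dots> = (\<Sum>i=m..k. \<Sum>j=m..k. c i j)"
    by (rule sum.swap)
  also have "\<dots> = (\<Sum>i=m..k. if i = k then a i else 0)"
    using column by simp
  also have "\<dots> = a k"
    using assms by simp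
  finally show ?thesis ..
qed

lemma vandermonde_shift:
  assumes "1 \<le> k"
  shows "(\<Sum>j=1..k. (k choose j) * (n choose (j - 1))) = (n + k) choose (k - 1)"
proof -
  have "(\<Sum>j=1..k. (k choose j) * (n choose (j - 1)))
      = (\<Sum>i=0..k - 1. (k choose (i + 1)) * (n choose i))"
    using assms sum.shift_bounds_cl_nat_ivl[of "\<lambda>j. (k choose j) * (n choose (j - 1))" 0 1 "k - 1"]
    by simp
  also have "\<dots> = (\<Sum>i\<le>k - 1. (n choose i) * (k choose (k - 1 - i)))"
  proof (rule sum.cong)
    fix i assume "i \<in> {..k - 1}"
    then have "k choose (i + 1) = k choose (k - 1 - i)"
      using binomial_symmetric[of "i + 1" k] assms by (simp add: Suc_diff_Suc)
    then show "(k choose (i + 1)) * (n choose i) = (n choose i) * (k choose (k - 1 - i))"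
      by simp
  qed (simp add: atLeast0AtMost)
  also have "\<dots> = (n + k) choose (k - 1)"
    by (rule vandermonde)
  finally show ?thesis .
qed

lemma choose_mult_narayana:
  assumes "1 \<le> j" "j \<le> k" "k \<le> n"
  shows "of_nat ((n - j) choose (k - j)) * narayana n j
       = of_nat ((n - 1) choose (k - 1)) / of_nat k * of_nat ((k choose j) * (n choose (j - 1)))"
proof -
  have "((n - 1) choose (k - 1)) * ((k - 1) choose (j - 1))
      = ((n - 1) choose (j - 1)) * ((n - j) choose (k - j))"
    using choose_mult_shift[of 1 j k n] assms by simp
  then have revise: "of_nat ((n - 1) choose (k - 1)) * of_nat ((k - 1) choose (j - 1))
      = (of_nat ((n - 1) choose (j - 1)) * of_nat ((n - j) choose (k - j)) :: rat)"
    by (metis of_nat_mult)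
  have shift_top: "of_nat ((k - 1) choose (j - 1)) / of_nat j = (of_nat (k choose j) / of_nat k :: rat)"
    using assms by (simp add: of_nat_choose_div_self[where 'a=rat, of j k])
  have "of_nat ((n - j) choose (k - j)) * narayana n j
      = of_nat ((n - j) choose (k - j)) * (of_nat (n choose j) / of_nat n) * of_nat (n choose (j - 1))"
    unfolding narayana_def by simp
  also have "\<dots> = of_nat ((n - 1) choose (j - 1)) * of_nat ((n - j) choose (k - j))
      * of_nat (n choose (j - 1)) / of_nat j"
    using assms by (simp add: of_nat_choose_div_self)
  also have "\<dots> = of_nat ((n - 1) choose (k - 1)) * of_nat ((k - 1) choose (j - 1))
      * of_nat (n choose (j - 1)) / of_nat j"
    by (simp only: revise)
  also have "\<dots> = of_nat ((n - 1) choose (k - 1)) * (of_nat ((k - 1) choose (j - 1)) / of_nat j)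
      * of_nat (n choose (j - 1))"
    by simp
  also have "\<dots> = of_nat ((n - 1) choose (k - 1)) / of_nat k * of_nat ((k choose j) * (n choose (j - 1)))"
    by (simp only: shift_top) simp
  finally show ?thesis .
qed

lemma wnum_eq_sum_narayana:
  assumes "1 \<le> k" "k \<le> n"
  shows "wnum n k = (\<Sum>j=1..k. of_nat ((n - j) choose (k - j)) * narayana n j)"
proof -
  have "(\<Sum>j=1..k. of_nat ((n - j) choose (k - j)) * narayana n j)
      = (\<Sum>j=1..k. of_nat ((n - 1) choose (k - 1)) / of_nat k
          * of_nat ((k choose j) * (n choose (j - 1))))"
    using assms by (intro sum.cong refl choose_mult_narayana) auto
  also have "\<dots> = of_nat ((n - 1) choose (k - 1)) / of_nat k
      * of_nat (\<Sum>j=1..k. (k choose j) * (n choose (j - 1)))"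
    by (simp only: sum_distrib_left of_nat_sum)
  also have "\<dots> = wnum n k"
    unfolding vandermonde_shift[OF assms(1)] wnum_def by simp
  finally show ?thesis ..
qed

theorem lemma4p4:
  fixes n k :: nat
  assumes "1 \<le> k" and "k \<le> n"
  shows "wnum n k = (\<Sum>j=1..k. of_nat ((n - j) choose (k - j)) * narayana n j)
     \<and> narayana n k = (\<Sum>j=1..k. of_nat ((n - j) choose (k - j)) * (-1) ^ (k - j) * wnum n j)"
  using wnum_eq_sum_narayana[OF assms]
    binomial_inversion_shifted[of 1 n "wnum n" "narayana n", OF wnum_eq_sum_narayana assms]
  by simp

end
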